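(* Let $\alpha_1,\alpha_2,\tau\ge0$. Let $\mathcal H$ be an $n$-vertex linear hypergraph in which every edge has size at least $1+\alpha_2$. Let $e\in\mathcal H$, $r:=|e|$, $m_1 := |\{f\in N(e): |f|\ge(1+\alpha_1)r\}|$ and $m_2 := |\{f\in N(e): (1+\alpha_1)r>|f|\ge r/(1+\alpha_2)\}|$. If $r>1+\alpha_2$, then (i) $(1+\alpha_1)m_1 + \frac{m_2}{1+\alpha_2} \le n + \frac{(1+\alpha_2)n}{r-1-\alpha_2}$. Moreover, if in addition $m_1+m_2\ge(1-\tau)n$ and $\alpha_1>0$, then (ii) $m_1 \le \left(\tau + \frac{(1+\alpha_2)(1+\alpha_2 r)}{r-1-\alpha_2}\right)\frac{n}{\alpha_1}$.
   Context: A hypergraph has a finite vertex set and a set of nonempty edges; linear means any two distinct edges share at most one vertex. $N(e)$ denotes the set of edges $f\ne e$ with $f\cap e\ne\varnothing$. *)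

theory Defs
  imports Complex_Main
begin

definition hypergraph :: "'a set \<Rightarrow> 'a set set \<Rightarrow> bool" where
  "hypergraph V E \<longleftrightarrow> finite V \<and> (\<forall>e\<in>E. e \<noteq> {} \<and> e \<subseteq> V)"

definition linear_hypergraph :: "'a set \<Rightarrow> 'a set set \<Rightarrow> bool" where
  "linear_hypergraph V E \<longleftrightarrow> hypergraph V E \<and>
     (\<forall>e\<in>E. \<forall>f\<in>E. e \<noteq> f \<longrightarrow> card (e \<inter> f) \<le> 1)"

definition nbhd :: "'a set set \<Rightarrow> 'a set \<Rightarrow> 'a set set" where
  "nbhd E e = {f \<in> E. f \<noteq> e \<and> f \<inter> e \<noteq> {}}"

end

theory Submission imports Defs begin

text \<open>Every neighbour f of e meets e in exactly one vertex, and two neighbours sharing a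
vertex outside e must meet e in different vertices, so each vertex outside e lies in at
most |e| neighbours. Double counting the pairs (v, f) with v \<in> f - e gives
\<Sum> (|f| - 1) \<le> |e| (n - |e|) over any set of neighbours f. Applied to the
m1 + m2 neighbours of size at least r/(1 + \<alpha>2) this first bounds m1 + m2, and then
the weighted count in (i); (ii) is arithmetic from (i).\<close>

lemma finite_edge:
  assumes "hypergraph V E" "f \<in> E"
  shows "finite f"
  using assms unfolding hypergraph_def by (meson finite_subset)

lemma finite_nbhd:
  assumes "hypergraph V E"
  shows "finite (nbhd E e)"
proof -
  have "nbhd E e \<subseteq> Pow V" using assms by (auto simp: nbhd_def hypergraph_def)
  then show ?thesis using assms by (meson finite_Pow_iff hypergraph_def rev_finite_subset)
qed

lemma card_nbhd_eq_card_Diff_Suc: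
  assumes L: "linear_hypergraph V E" and eE: "e \<in> E" and f: "f \<in> nbhd E e"
  shows "card f = Suc (card (f - e))"
proof -
  have fE: "f \<in> E" "f \<noteq> e" "f \<inter> e \<noteq> {}" using f by (auto simp: nbhd_def)
  have fin: "finite f" using L fE(1) finite_edge by (auto simp: linear_hypergraph_def)
  have "card (f \<inter> e) \<le> 1" using L fE eE unfolding linear_hypergraph_def by blast
  moreover have "card (f \<inter> e) \<noteq> 0" using fin fE(3) by simp
  moreover have "card f = card (f - e) + card (f \<inter> e)"
    using fin by (metis Int_Diff_disjoint Un_Diff_Int card_Un_disjoint finite_Diff finite_Int inf_commute)
  ultimately show ?thesis by linarith
qed

lemma card_nbhd_through_vertex_le:
  assumes L: "linear_hypergraph V E" and eE: "e \<in> E" and F: "F \<subseteq> nbhd E e" and v: "v \<notin> e"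
  shows "card {f \<in> F. v \<in> f} \<le> card e"
proof -
  have H: "hypergraph V E" using L by (simp add: linear_hypergraph_def)
  define g where "g f = (SOME x. x \<in> f \<inter> e)" for f
  have g: "g f \<in> f \<inter> e" if "f \<in> F" for f
  proof -
    have "f \<inter> e \<noteq> {}" using F that by (auto simp: nbhd_def)
    then show ?thesis unfolding g_def by (meson ex_in_conv someI_ex)
  qed
  have "inj_on g {f \<in> F. v \<in> f}"
  proof (rule inj_onI, rule ccontr)
    fix f f' assume f: "f \<in> {f \<in> F. v \<in> f}" and f': "f' \<in> {f \<in> F. v \<in> f}"
      and "g f = g f'" and "f \<noteq> f'"
    have E2: "f \<in> E" "f' \<in> E" using f f' F by (auto simp: nbhd_def)
    have "{v, g f} \<subseteq> f \<inter> f'" using f f' g[of f] g[of f'] \<open>g f = g f'\<close> by auto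
    then have "card {v, g f} \<le> card (f \<inter> f')"
      using finite_edge[OF H E2(1)] by (intro card_mono) auto
    moreover have "v \<noteq> g f" using g[of f] f v by auto
    moreover have "card (f \<inter> f') \<le> 1"
      using L E2 \<open>f \<noteq> f'\<close> unfolding linear_hypergraph_def by blast
    ultimately show False by simp
  qed
  moreover have "g ` {f \<in> F. v \<in> f} \<subseteq> e" using g by auto
  ultimately show ?thesis using finite_edge[OF H eE] by (meson card_inj_on_le)
qed

lemma sum_card_Diff_nbhd_le:
  assumes L: "linear_hypergraph V E" and eE: "e \<in> E" and F: "F \<subseteq> nbhd E e"
  shows "(\<Sum>f\<in>F. card (f - e)) \<le> card e * card (V - e)"
proof -
  have H: "hypergraph V E" using L by (simp add: linear_hypergraph_def)
  have finV: "finite V" using H by (simp add: hypergraph_def)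
  have FV: "f \<subseteq> V" if "f \<in> F" for f using that F H by (auto simp: nbhd_def hypergraph_def)
  have finF: "finite F" using F finite_nbhd[OF H] by (rule finite_subset)
  have "(\<Sum>f\<in>F. card (f - e)) = (\<Sum>f\<in>F. \<Sum>v\<in>V - e. if v \<in> f then 1 else 0)"
  proof (rule sum.cong[OF refl])
    fix f assume "f \<in> F"
    then have "f - e = {v \<in> V - e. v \<in> f}" using FV by auto
    then show "card (f - e) = (\<Sum>v\<in>V - e. if v \<in> f then 1 else 0)"
      using finV by (simp add: sum.If_cases Int_def)
  qed
  also have "\<dots> = (\<Sum>v\<in>V - e. \<Sum>f\<in>F. if v \<in> f then 1 else 0)" by (rule sum.swap)
  also have "\<dots> = (\<Sum>v\<in>V - e. card {f \<in> F. v \<in> f})"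
    using finF by (simp add: sum.If_cases Int_def)
  also have "\<dots> \<le> (\<Sum>v\<in>V - e. card e)"
    by (rule sum_mono) (use card_nbhd_through_vertex_le[OF L eE F] in auto)
  finally show ?thesis by (simp add: mult.commute)
qed

lemma sum_card_nbhd_le:
  assumes L: "linear_hypergraph V E" and eE: "e \<in> E" and F: "F \<subseteq> nbhd E e"
  shows "(\<Sum>f\<in>F. real (card f)) \<le> real (card e) * (real (card V) - card e) + card F"
proof -
  have H: "hypergraph V E" using L by (simp add: linear_hypergraph_def)
  have "e \<subseteq> V" "finite V" using H eE by (auto simp: hypergraph_def)
  then have "card (V - e) = card V - card e" "card e \<le> card V"
    by (auto simp: card_Diff_subset finite_subset card_mono)
  then have "real (\<Sum>f\<in>F. card (f - e)) \<le> real (card e) * (real (card V) - card e)"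
    using sum_card_Diff_nbhd_le[OF L eE F] by (metis of_nat_diff of_nat_le_iff of_nat_mult)
  moreover have "(\<Sum>f\<in>F. real (card f)) = (\<Sum>f\<in>F. real (card (f - e))) + card F"
    using card_nbhd_eq_card_Diff_Suc[OF L eE] F by (simp add: subset_iff sum.distrib)
  ultimately show ?thesis by simp
qed

lemma weighted_neighbour_count_bound:
  fixes \<alpha>1 \<alpha>2 r n m1 m2 S :: real
  assumes "\<alpha>1 \<ge> 0" "\<alpha>2 \<ge> 0" "r > 1 + \<alpha>2" "m1 \<ge> 0"
    and lower: "r * ((1 + \<alpha>1) * m1 + m2 / (1 + \<alpha>2)) \<le> S"
    and upper: "S \<le> r * (n - r) + (m1 + m2)"
  shows "(1 + \<alpha>1) * m1 + m2 / (1 + \<alpha>2) \<le> n + (1 + \<alpha>2) * n / (r - 1 - \<alpha>2)"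
proof -
  define D where "D = r - 1 - \<alpha>2"
  define k where "k = m1 + m2"
  have D: "D > 0" "r > 0" using assms(2,3) by (auto simp: D_def)
  have "m1 / (1 + \<alpha>2) \<le> m1" "m1 \<le> (1 + \<alpha>1) * m1"
    using assms(1,2,4) by (simp_all add: divide_le_eq algebra_simps)
  then have "k / (1 + \<alpha>2) \<le> (1 + \<alpha>1) * m1 + m2 / (1 + \<alpha>2)"
    unfolding k_def add_divide_distrib by linarith
  then have "r * (k / (1 + \<alpha>2)) \<le> r * (n - r) + k"
    using lower upper D(2) mult_left_mono[of _ _ r] unfolding k_def by fastforce
  then have "k * D \<le> (1 + \<alpha>2) * r * (n - r)"
    using assms(2) by (simp add: D_def field_simps)
  then have k: "k \<le> (1 + \<alpha>2) * r * (n - r) / D" using D by (simp add: le_divide_eq)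
  have "r * ((1 + \<alpha>1) * m1 + m2 / (1 + \<alpha>2)) \<le> r * (n - r) + (1 + \<alpha>2) * r * (n - r) / D"
    using lower upper k by (simp add: k_def)
  also have "\<dots> = r * ((n - r) + (1 + \<alpha>2) * (n - r) / D)" by (simp add: algebra_simps)
  finally have "(1 + \<alpha>1) * m1 + m2 / (1 + \<alpha>2) \<le> (n - r) + (1 + \<alpha>2) * (n - r) / D"
    using D(2) by simp
  also have "\<dots> \<le> n + (1 + \<alpha>2) * n / D"
  proof -
    have "(1 + \<alpha>2) * (n - r) \<le> (1 + \<alpha>2) * n" using D(2) assms(2) by simp
    then have "(1 + \<alpha>2) * (n - r) / D \<le> (1 + \<alpha>2) * n / D" using D(1) by (simp add: divide_right_mono)
    then show ?thesis using D(2) by simp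
  qed
  finally show ?thesis by (simp add: D_def)
qed

lemma large_neighbour_count_bound:
  fixes \<alpha>1 \<alpha>2 \<tau> r n m1 m2 :: real
  assumes "\<alpha>1 > 0" "\<alpha>2 \<ge> 0" "\<tau> \<ge> 0" "r > 1 + \<alpha>2" "n \<ge> 0" "m1 \<ge> 0"
    and weighted: "(1 + \<alpha>1) * m1 + m2 / (1 + \<alpha>2) \<le> n + (1 + \<alpha>2) * n / (r - 1 - \<alpha>2)"
    and cover: "m1 + m2 \<ge> (1 - \<tau>) * n"
  shows "m1 \<le> (\<tau> + (1 + \<alpha>2) * (1 + \<alpha>2 * r) / (r - 1 - \<alpha>2)) * n / \<alpha>1"
proof -
  define D where "D = r - 1 - \<alpha>2"
  have D: "D > 0" "D \<le> (1 + \<alpha>2) * r" using assms(2,4) by (auto simp: D_def algebra_simps)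
  have "((1 - \<tau>) * n - m1) / (1 + \<alpha>2) \<le> m2 / (1 + \<alpha>2)"
    using cover assms(2) by (intro divide_right_mono) auto
  moreover have "m1 / (1 + \<alpha>2) \<le> m1"
    using assms(2,6) by (simp add: divide_le_eq algebra_simps)
  ultimately have "\<alpha>1 * m1 \<le> n + (1 + \<alpha>2) * n / D - (1 - \<tau>) * n / (1 + \<alpha>2)"
    using weighted unfolding D_def diff_divide_distrib by (simp add: algebra_simps)
  also have "\<dots> = n * ((\<alpha>2 + \<tau>) / (1 + \<alpha>2) + (1 + \<alpha>2) / D)"
    using assms(2) D by (simp add: field_simps)
  also have "\<dots> \<le> n * (\<tau> + (1 + \<alpha>2) * (1 + \<alpha>2 * r) / D)"
  proof (rule mult_left_mono[OF _ assms(5)])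
    have "\<tau> / (1 + \<alpha>2) \<le> \<tau>" "\<alpha>2 / (1 + \<alpha>2) \<le> \<alpha>2"
      using assms(2,3) by (simp_all add: divide_le_eq algebra_simps)
    moreover have "1 \<le> (1 + \<alpha>2) * r / D" using D by simp
    then have "\<alpha>2 \<le> \<alpha>2 * ((1 + \<alpha>2) * r / D)"
      using assms(2) mult_left_mono by fastforce
    moreover have "(1 + \<alpha>2) * (1 + \<alpha>2 * r) / D = (1 + \<alpha>2) / D + \<alpha>2 * ((1 + \<alpha>2) * r / D)"
      by (simp add: field_simps add_divide_distrib)
    ultimately show "(\<alpha>2 + \<tau>) / (1 + \<alpha>2) + (1 + \<alpha>2) / D \<le> \<tau> + (1 + \<alpha>2) * (1 + \<alpha>2 * r) / D"
      unfolding add_divide_distrib by linarith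
  qed
  finally show ?thesis using assms(1) by (simp add: le_divide_eq D_def mult.commute)
qed

theorem proposition6p3:
  fixes V :: "'a set" and E :: "'a set set" and e :: "'a set"
    and \<alpha>1 \<alpha>2 \<tau> :: real and n r m1 m2 :: nat
  assumes "\<alpha>1 \<ge> 0" and "\<alpha>2 \<ge> 0" and "\<tau> \<ge> 0"
    and "linear_hypergraph V E" and "card V = n"
    and "\<forall>f\<in>E. real (card f) \<ge> 1 + \<alpha>2"
    and "e \<in> E" and "r = card e"
    and "m1 = card {f \<in> nbhd E e. real (card f) \<ge> (1 + \<alpha>1) * r}"
    and "m2 = card {f \<in> nbhd E e. (1 + \<alpha>1) * r > real (card f) \<and> real (card f) \<ge> r / (1 + \<alpha>2)}"
    and "real r > 1 + \<alpha>2"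
  shows "((1 + \<alpha>1) * m1 + m2 / (1 + \<alpha>2) \<le> n + (1 + \<alpha>2) * n / (real r - 1 - \<alpha>2))
    \<and> (real m1 + m2 \<ge> (1 - \<tau>) * n \<longrightarrow> \<alpha>1 > 0 \<longrightarrow>
         m1 \<le> (\<tau> + (1 + \<alpha>2) * (1 + \<alpha>2 * r) / (real r - 1 - \<alpha>2)) * n / \<alpha>1)"
proof -
  define A where "A = {f \<in> nbhd E e. real (card f) \<ge> (1 + \<alpha>1) * r}"
  define B where "B = {f \<in> nbhd E e. (1 + \<alpha>1) * r > real (card f) \<and> real (card f) \<ge> r / (1 + \<alpha>2)}"
  have "finite (nbhd E e)" using finite_nbhd assms(4) by (auto simp: linear_hypergraph_def)
  then have fin: "finite A" "finite B" by (simp_all add: A_def B_def)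
  have m: "card A = m1" "card B = m2" using assms(9,10) by (simp_all add: A_def B_def)
  have AB: "A \<inter> B = {}" "A \<union> B \<subseteq> nbhd E e" by (auto simp: A_def B_def)
  have "r * ((1 + \<alpha>1) * m1 + m2 / (1 + \<alpha>2)) = m1 * ((1 + \<alpha>1) * r) + m2 * (r / (1 + \<alpha>2))"
    by (simp add: algebra_simps)
  also have "\<dots> \<le> (\<Sum>f\<in>A. real (card f)) + (\<Sum>f\<in>B. real (card f))"
    using sum_bounded_below[of A "(1 + \<alpha>1) * r"] sum_bounded_below[of B "r / (1 + \<alpha>2)"]
    by (simp add: m[symmetric] A_def B_def add_mono)
  also have "\<dots> = (\<Sum>f\<in>A \<union> B. real (card f))" using fin AB by (simp add: sum.union_disjoint)
  also have "\<dots> \<le> r * (real n - r) + (m1 + m2)"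
    using sum_card_nbhd_le[OF assms(4,7) AB(2)] fin AB
    by (simp add: assms(5,8) m card_Un_disjoint)
  finally have "(1 + \<alpha>1) * m1 + m2 / (1 + \<alpha>2) \<le> n + (1 + \<alpha>2) * n / (real r - 1 - \<alpha>2)"
    using weighted_neighbour_count_bound assms(1,2,11) by simp
  then show ?thesis
    using large_neighbour_count_bound[OF _ assms(2,3,11)] by simp
qed

end
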